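(* For a tuple $\vec a=(a_1,\dots,a_{2i})$ of odd integers and a virtual character $\chi$ of $C_8$, set $$F_{4i+1}(\vec a)(\chi)=\frac18\sum_{1\ne\lambda\in C_8}\frac{\lambda^{(a_1+\cdots+a_{2i})/2}(1+\lambda^{a_1})}{(1-\lambda^{a_1})^2(1-\lambda^{a_2})\cdots(1-\lambda^{a_{2i}})}\,\chi(\lambda).$$ Then $F_5((1,1))(2\rho_0-\rho_1-\rho_3)$ has order $2$ in $\mathbb{R}/\mathbb{Z}$ and $F_{13}((1,1,1,1,1,1))(2\rho_0-\rho_1-\rho_3)$ has order $4$ in $\mathbb{R}/\mathbb{Z}$.
   Context: $C_8=\{\lambda\in S^1:\lambda^8=1\}$, $\rho_a(\lambda)=\lambda^a$, $\rho_0$ trivial. $F_{4i+1}(\vec a)(\rho)$ equals the eta invariant of $X^{4i+1}(8,\vec a)-X^{4i+1}_0(8,\vec a)$ twisted by $\rho$, where $X^{4i+1}(8,\vec a)=S(H\otimes H\oplus(2i-1)\mathbb{C}\to S^2)/C_8$ with $H$ the Hopf line bundle over $S^2$ and $C_8$ acting fibrewise via $\rho_{a_1}\oplus\cdots\oplus\rho_{a_{2i}}$. The virtual representation $2\rho_0-\rho_1-\rho_3$ is the restriction to $\langle s\rangle\cong C_8$ of $2-\chi_\rho$ for the 2-dimensional representation $\chi_\rho$ of $SD_{16}$. *)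

theory Defs
  imports Complex_Main
begin

definition C8 :: "complex set" where
  "C8 = {z. z ^ 8 = 1}"

definition rho :: "int \<Rightarrow> complex \<Rightarrow> complex" where
  "rho k z = z powi k"

definition F :: "int list \<Rightarrow> (complex \<Rightarrow> complex) \<Rightarrow> complex" where
  "F a chi = (1/8) * (\<Sum>z\<in>C8 - {1}.
      (z powi (sum_list a div 2) * (1 + z powi (a ! 0))) /
      ((1 - z powi (a ! 0))^2 * (\<Prod>j\<in>{1..<length a}. (1 - z powi (a ! j)))) * chi z)"

definition has_order_RZ :: "real \<Rightarrow> nat \<Rightarrow> bool" where
  "has_order_RZ x n \<longleftrightarrow> 0 < n \<and> real n * x \<in> \<int> \<and>
     (\<forall>m. 0 < m \<and> m < n \<longrightarrow> real m * x \<notin> \<int>)"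

end

theory Submission
  imports Defs "HOL-Computational_Algebra.Polynomial"
begin

(* Both values of F are computed exactly: F_5((1,1))(2 rho_0 - rho_1 - rho_3) = -3/2 and
   F_13((1,1,1,1,1,1))(2 rho_0 - rho_1 - rho_3) = -17/4, which have orders 2 and 4 in R/Z.

   For the all-ones tuple of length 2i the summand of F is z^i (1 + z) chi(z) / (1 - z)^(2i+1).
   A nontrivial 8th root of unity z satisfies 1 + z + ... + z^7 = 0, so if
   z^i (1 + z) chi(z) = P(z) (1 - z)^(2i+1) + R(z) (1 + z + ... + z^7) as polynomials, the
   summand equals P(z) there.  Orthogonality of the characters z |-> z^k on the n-th roots of
   unity turns the sum of P over the nontrivial 8th roots into 8 P_0 - P(1), so
   F = P_0 - P(1)/8.  For the two tuples, P and R are explicit and the division identity is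
   checked by ring normalisation.  Finally, a fraction a/n in lowest terms has order n in R/Z. *)

lemma sum_roots_unity_power:
  assumes "0 < m" "m < n"
  shows "(\<Sum>z\<in>{z::complex. z ^ n = 1}. z ^ m) = 0"
proof -
  define w where "w = cis (2 * pi * real m / real n)"
  have w_ne_1: "w \<noteq> 1"
  proof
    assume "w = 1"
    then have "cos (2 * pi * real m / real n) = 1" by (auto simp: w_def complex_eq_iff)
    then obtain j :: int where "2 * pi * real m / real n = j * 2 * pi"
      by (auto simp: cos_one_2pi_int)
    with assms have "real m = real n * j" by (simp add: field_simps)
    then have "int m = int n * j" by (metis of_int_eq_iff of_int_mult of_int_of_nat_eq)
    with assms show False
      by (metis dvdI int_dvd_int_iff nat_dvd_not_less)
  qed
  have "(\<Sum>z\<in>{z::complex. z ^ n = 1}. z ^ m) = (\<Sum>k<n. cis (2 * pi * real k / real n) ^ m)"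
    using assms by (intro sum.reindex_bij_betw [symmetric] bij_betw_roots_unity) auto
  also have "\<dots> = (\<Sum>k<n. w ^ k)"
    by (intro sum.cong refl) (simp add: w_def DeMoivre mult_ac)
  also have "\<dots> = (w ^ n - 1) / (w - 1)"
    using w_ne_1 by (subst geometric_sum) auto
  also have "w ^ n = cis (2 * pi) ^ m"
    using assms by (simp add: w_def DeMoivre mult_ac)
  also have "cis (2 * pi) = 1" by (simp add: complex_eq_iff)
  finally show ?thesis by simp
qed

lemma sum_roots_unity_poly:
  fixes p :: "complex poly"
  assumes "degree p < n"
  shows "(\<Sum>z\<in>{z. z ^ n = 1}. poly p z) = of_nat n * coeff p 0"
proof -
  have n_pos: "0 < n" using assms by simp
  have poly_eq: "poly p z = (\<Sum>k<n. coeff p k * z ^ k)" for z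
  proof -
    have "(\<Sum>k<n. coeff p k * z ^ k) = (\<Sum>k\<le>degree p. coeff p k * z ^ k)"
      using assms by (intro sum.mono_neutral_right) (auto simp: coeff_eq_0)
    then show ?thesis by (simp add: poly_altdef)
  qed
  have "(\<Sum>z\<in>{z. z ^ n = 1}. poly p z) = (\<Sum>z\<in>{z. z ^ n = 1}. \<Sum>k<n. coeff p k * z ^ k)"
    by (simp add: poly_eq)
  also have "\<dots> = (\<Sum>k<n. coeff p k * (\<Sum>z\<in>{z::complex. z ^ n = 1}. z ^ k))"
    by (simp add: sum.swap [of _ "{z. z ^ n = 1}"] sum_distrib_left)
  also have "\<dots> = (\<Sum>k<n. if k = 0 then of_nat n * coeff p 0 else 0)"
    using n_pos sum_roots_unity_power card_roots_unity_eq[of n]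
    by (intro sum.cong refl) auto
  also have "\<dots> = of_nat n * coeff p 0"
    using n_pos by (simp add: sum.delta)
  finally show ?thesis .
qed

lemma sum_C8_nontrivial_poly:
  fixes p :: "complex poly"
  assumes "degree p < 8"
  shows "(\<Sum>z\<in>C8 - {1}. poly p z) = 8 * coeff p 0 - poly p 1"
proof -
  have "finite C8" unfolding C8_def by (rule finite_roots_unity) simp
  moreover have "1 \<in> C8" by (simp add: C8_def)
  ultimately show ?thesis
    using sum_roots_unity_poly[OF assms] by (simp add: C8_def sum_diff1)
qed

lemma divide_at_root_of_unity:
  fixes z q c d r :: complex
  assumes "z ^ n = 1" "z \<noteq> 1" "d \<noteq> 0"
    and "q = c * d + r * (\<Sum>k<n. z ^ k)"
  shows "q / d = c"
proof -
  have "(\<Sum>k<n. z ^ k) = 0"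
    using assms(1,2) by (simp add: geometric_sum)
  with assms(3,4) show ?thesis by simp
qed

lemma F_replicate_ones:
  assumes "0 < i"
  shows "F (replicate (2 * i) 1) chi =
    (1/8) * (\<Sum>z\<in>C8 - {1}. z ^ i * (1 + z) / (1 - z) ^ (2 * i + 1) * chi z)"
proof -
  let ?a = "replicate (2 * i) (1::int)"
  have half_sum: "sum_list ?a div 2 = int i"
    by (simp add: sum_list_replicate)
  have first: "?a ! 0 = 1" using assms by simp
  have summand: "z powi (sum_list ?a div 2) * (1 + z powi (?a ! 0)) /
      ((1 - z powi (?a ! 0)) ^ 2 * (\<Prod>j\<in>{1..<2 * i}. 1 - z powi (?a ! j)))
      = z ^ i * (1 + z) / (1 - z) ^ (2 * i + 1)" for z :: complex
  proof -
    have "(\<Prod>j\<in>{1..<2 * i}. 1 - z powi (?a ! j)) = (\<Prod>j\<in>{1..<2 * i}. 1 - z)"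
      by (intro prod.cong refl) simp
    then have prod_eq: "(\<Prod>j\<in>{1..<2 * i}. 1 - z powi (?a ! j)) = (1 - z) ^ (2 * i - 1)"
      by simp
    have exponent: "2 + (2 * i - 1) = 2 * i + 1" using assms by simp
    have "z powi (sum_list ?a div 2) * (1 + z powi (?a ! 0)) /
        ((1 - z powi (?a ! 0)) ^ 2 * (\<Prod>j\<in>{1..<2 * i}. 1 - z powi (?a ! j)))
        = z ^ i * (1 + z) / ((1 - z) ^ 2 * (1 - z) ^ (2 * i - 1))"
      by (simp only: half_sum first prod_eq power_int_of_nat power_int_1_right)
    also have "\<dots> = z ^ i * (1 + z) / (1 - z) ^ (2 * i + 1)"
      by (simp only: power_add [symmetric] exponent)
    finally show ?thesis .
  qed
  show ?thesis
    unfolding F_def length_replicate summand ..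
qed

lemma F_replicate_ones_poly:
  fixes P R :: "complex poly"
  assumes "0 < i" "degree P < 8"
    and division: "\<And>z. z ^ i * (1 + z) * chi z
      = poly P z * (1 - z) ^ (2 * i + 1) + poly R z * (\<Sum>k<8. z ^ k)"
  shows "F (replicate (2 * i) 1) chi = coeff P 0 - poly P 1 / 8"
proof -
  have summand: "z ^ i * (1 + z) / (1 - z) ^ (2 * i + 1) * chi z = poly P z"
    if "z \<in> C8 - {1}" for z
  proof -
    have "z ^ i * (1 + z) * chi z / (1 - z) ^ (2 * i + 1) = poly P z"
    proof (rule divide_at_root_of_unity)
      show "z ^ 8 = 1" "z \<noteq> 1" using that by (auto simp: C8_def)
      then show "(1 - z) ^ (2 * i + 1) \<noteq> 0" by simp
    qed (rule division)
    then show ?thesis by simp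
  qed
  have "F (replicate (2 * i) 1) chi = (1/8) * (\<Sum>z\<in>C8 - {1}. poly P z)"
    using summand by (simp add: F_replicate_ones assms(1))
  also have "\<dots> = coeff P 0 - poly P 1 / 8"
    using assms(2) by (simp add: sum_C8_nontrivial_poly)
  finally show ?thesis .
qed

lemma virtual_character_eq: "2 * rho 0 z - rho 1 z - rho 3 z = 2 - z - z ^ 3"
  by (simp add: rho_def)

lemma F5_division:
  fixes z :: complex
  shows "z ^ 1 * (1 + z) * (2 - z - z ^ 3)
    = poly [:- 3/2, - 11/4, - 2, - 1/4, 3/2, 9/4, 2, 3/4:] z * (1 - z) ^ (2 * 1 + 1)
    + poly [:3/2, - 5/4, - 1, 3/4:] z * (\<Sum>k<8. z ^ k)"
  by (simp add: eval_nat_numeral) algebra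

lemma F13_division:
  fixes z :: complex
  shows "z ^ 3 * (1 + z) * (2 - z - z ^ 3)
    = poly [:- 17/4, - 117/16, - 6, - 19/16, 17/4, 115/16, 6, 21/16:] z * (1 - z) ^ (2 * 3 + 1)
    + poly [:17/4, - 427/16, 133/2, - 1249/16, 165/4, - 65/16, - 9/2, 21/16:] z
      * (\<Sum>k<8. z ^ k)"
  by (simp add: eval_nat_numeral) algebra

lemma F5_value: "F [1,1] (\<lambda>z. 2 * rho 0 z - rho 1 z - rho 3 z) = - 3 / 2"
proof -
  have "F [1,1] (\<lambda>z. 2 * rho 0 z - rho 1 z - rho 3 z)
      = F (replicate (2 * 1) 1) (\<lambda>z. 2 - z - z ^ 3)"
    by (simp add: numeral_2_eq_2 virtual_character_eq)
  also have "\<dots> = - 3 / 2"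
    by (subst F_replicate_ones_poly [OF _ _ F5_division]) simp_all
  finally show ?thesis .
qed

lemma F13_value: "F [1,1,1,1,1,1] (\<lambda>z. 2 * rho 0 z - rho 1 z - rho 3 z) = - 17 / 4"
proof -
  have "F [1,1,1,1,1,1] (\<lambda>z. 2 * rho 0 z - rho 1 z - rho 3 z)
      = F (replicate (2 * 3) 1) (\<lambda>z. 2 - z - z ^ 3)"
    by (simp add: numeral_eq_Suc virtual_character_eq)
  also have "\<dots> = - 17 / 4"
    by (subst F_replicate_ones_poly [OF _ _ F13_division]) simp_all
  finally show ?thesis .
qed

lemma has_order_RZ_fraction:
  assumes "0 < n" "coprime a (int n)"
  shows "has_order_RZ (of_int a / real n) n"
  unfolding has_order_RZ_def
proof (intro conjI allI impI)
  show "0 < n" by fact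
  show "real n * (of_int a / real n) \<in> \<int>" using assms by simp
  fix m assume m: "0 < m \<and> m < n"
  show "real m * (of_int a / real n) \<notin> \<int>"
  proof
    assume "real m * (of_int a / real n) \<in> \<int>"
    then obtain k :: int where "real m * (of_int a / real n) = of_int k" by (auto elim: Ints_cases)
    with assms have "int m * a = int n * k"
      by (simp add: field_simps) (metis of_int_eq_iff of_int_mult of_int_of_nat_eq)
    then have "int n dvd int m * a" by simp
    with assms have "int n dvd int m" by (simp add: coprime_dvd_mult_left_iff coprime_commute)
    with m show False by (simp add: nat_dvd_not_less)
  qed
qed

theorem mainTheorem7:
  shows "F [1,1] (\<lambda>z. 2 * rho 0 z - rho 1 z - rho 3 z) \<in> \<real> \<and>
    has_order_RZ (Re (F [1,1] (\<lambda>z. 2 * rho 0 z - rho 1 z - rho 3 z))) 2 \<and>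
    F [1,1,1,1,1,1] (\<lambda>z. 2 * rho 0 z - rho 1 z - rho 3 z) \<in> \<real> \<and>
    has_order_RZ (Re (F [1,1,1,1,1,1] (\<lambda>z. 2 * rho 0 z - rho 1 z - rho 3 z))) 4"
proof -
  have "has_order_RZ (of_int (- 3) / real 2) 2"
    by (rule has_order_RZ_fraction) auto
  moreover have "has_order_RZ (of_int (- 17) / real 4) 4"
    by (rule has_order_RZ_fraction) (simp_all add: coprime_iff_gcd_eq_1 gcd_non_0_int)
  ultimately show ?thesis
    by (simp add: F5_value F13_value)
qed

end
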